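(* Consider the MPG algorithm described in the context, and suppose that Assumption (A1) holds and that for each $j=1,\ldots,m$ the gradient $\nabla G_j$ is Lipschitz continuous with constant $L_j>0$. Then, for a given tolerance $\varepsilon>0$, the MPG algorithm generates a point $x^k$ such that $|\theta_\alpha(x^k)|\le\varepsilon$ in at most $\mathcal{O}(1/\varepsilon)$ iterations (that is, there is a constant $C>0$, independent of $\varepsilon$, such that some iterate $x^k$ with $k\le C/\varepsilon$ satisfies $|\theta_\alpha(x^k)|\le\varepsilon$).
   Context: Let $F:\mathbb{R}^n\to(\mathbb{R}\cup\{+\infty\})^m$, $F=(F_1,\ldots,F_m)$, with $F_j=G_j+H_j$ for $j=1,\ldots,m$, where: (i) each $G_j:\mathbb{R}^n\to\mathbb{R}$ is continuously differentiable and convex; (ii) each $H_j:\mathbb{R}^n\to\mathbb{R}\cup\{+\infty\}$ is proper, convex and continuous on its domain; (iii) $\mathrm{dom}(F):=\{x: F_j(x)<+\infty\ \forall j\}$ is nonempty and closed. For $u,v\in\mathbb{R}^m$, $u\preceq v$ means $u_j\le v_j$ for all $j$. Assumption (A1): for every sequence $\{y^k\}\subset\mathrm{dom}(F)$ with $F(y^{k+1})\preceq F(y^k)$ for all $k$, there exists $y\in\mathrm{dom}(F)$ with $F(y)\preceq F(y^k)$ for all $k$. For $x\in\mathrm{dom}(F)$ and $\alpha>0$ define $\psi_x(u):=\max_{j=1,\ldots,m}\big(\nabla G_j(x)^\top(u-x)+H_j(u)-H_j(x)\big)$, $p_\alpha(x):=\arg\min_{u\in\mathbb{R}^n}\psi_x(u)+\frac{1}{2\alpha}\|u-x\|^2$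 (unique minimizer), and $\theta_\alpha(x):=\psi_x(p_\alpha(x))+\frac{1}{2\alpha}\|p_\alpha(x)-x\|^2$ (one has $\theta_\alpha\le 0$, with equality exactly at weakly Pareto optimal points). MPG algorithm. Step 0: choose $x^0\in\mathrm{dom}(F)$, $\alpha>0$, $\gamma\in(0,2/\alpha)$, $0<\tau_1<\tau_2<1$; set $k=0$. Step 1: compute $p^k:=p_\alpha(x^k)$ and $\theta_\alpha(x^k)$. Step 2: if $\theta_\alpha(x^k)=0$, stop. Step 3: set $d^k:=p^k-x^k$, take $j_k^*\in\arg\max_{j}\nabla G_j(x^k)^\top d^k$, set $t=1$. Step 3.1: if $G_{j_k^*}(x^k+td^k)\le G_{j_k^*}(x^k)+t\nabla G_{j_k^*}(x^k)^\top d^k+t\frac{\gamma}{2}\|d^k\|^2$, go to Step 3.2; otherwise replace $t$ by some value in $[\tau_1 t,\tau_2 t]$ and repeat Step 3.1. Step 3.2: if $F(x^k+td^k)\preceq F(x^k)$, set $t_k=t$ and go to Step 4. Step 3.3: replace $t$ by some value in $[\tau_1 t,\tau_2 t]$; if $G_j(x^k+td^k)\le G_j(x^k)+t\nabla G_j(x^k)^\top d^k+t\frac{\gamma}{2}\|d^k\|^2$ for all $j=1,\ldots,m$, set $t_k=t$ and go to Step 4; otherwise repeat Step 3.3. Step 4: $x^{k+1}:=x^k+t_kd^k$, $k\leftarrow k+1$, go to Step 1. *)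

theory Defs
  imports "HOL-Analysis.Analysis"
begin

text \<open>Objectives are indexed by j in {..<m}. Each H j is represented by its effective
domain domH j and its (real) values on it; H j = +infinity outside domH j.\<close>

definition domF :: "nat \<Rightarrow> (nat \<Rightarrow> 'a set) \<Rightarrow> 'a set" where
  "domF m domH = (\<Inter>j\<in>{..<m}. domH j)"

text \<open>F y \<preceq> F x (for x in dom F): y must lie in dom F (else some F j y = +infinity).\<close>
definition Fle :: "nat \<Rightarrow> (nat \<Rightarrow> 'a \<Rightarrow> real) \<Rightarrow> (nat \<Rightarrow> 'a \<Rightarrow> real) \<Rightarrow> (nat \<Rightarrow> 'a set)
    \<Rightarrow> 'a \<Rightarrow> 'a \<Rightarrow> bool" where
  "Fle m G H domH y x \<longleftrightarrow> y \<in> domF m domH \<and> (\<forall>j<m. G j y + H j y \<le> G j x + H j x)"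

definition psi :: "nat \<Rightarrow> (nat \<Rightarrow> 'a \<Rightarrow> 'a::real_inner) \<Rightarrow> (nat \<Rightarrow> 'a \<Rightarrow> real) \<Rightarrow> 'a \<Rightarrow> 'a \<Rightarrow> real" where
  "psi m gG H x u = Max ((\<lambda>j. gG j x \<bullet> (u - x) + H j u - H j x) ` {..<m})"

text \<open>The unique minimizer of psi_x(u) + |u-x|^2/(2 alpha); outside dom F the objective is +infinity.\<close>
definition p_alpha :: "nat \<Rightarrow> (nat \<Rightarrow> 'a \<Rightarrow> 'a::real_inner) \<Rightarrow> (nat \<Rightarrow> 'a \<Rightarrow> real) \<Rightarrow> (nat \<Rightarrow> 'a set)
    \<Rightarrow> real \<Rightarrow> 'a \<Rightarrow> 'a" where
  "p_alpha m gG H domH \<alpha> x = (THE u. u \<in> domF m domH \<and>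
     (\<forall>v\<in>domF m domH. psi m gG H x u + (norm (u - x))\<^sup>2 / (2 * \<alpha>)
                        \<le> psi m gG H x v + (norm (v - x))\<^sup>2 / (2 * \<alpha>)))"

definition theta_alpha :: "nat \<Rightarrow> (nat \<Rightarrow> 'a \<Rightarrow> 'a::real_inner) \<Rightarrow> (nat \<Rightarrow> 'a \<Rightarrow> real) \<Rightarrow> (nat \<Rightarrow> 'a set)
    \<Rightarrow> real \<Rightarrow> 'a \<Rightarrow> real" where
  "theta_alpha m gG H domH \<alpha> x =
     (let p = p_alpha m gG H domH \<alpha> x in psi m gG H x p + (norm (p - x))\<^sup>2 / (2 * \<alpha>))"

definition armijo :: "(nat \<Rightarrow> 'a \<Rightarrow> real) \<Rightarrow> (nat \<Rightarrow> 'a \<Rightarrow> 'a::real_inner) \<Rightarrow> real \<Rightarrow> 'a \<Rightarrow> 'a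
    \<Rightarrow> nat \<Rightarrow> real \<Rightarrow> bool" where
  "armijo G gG \<gamma> x d j t \<longleftrightarrow>
     G j (x + t *\<^sub>R d) \<le> G j x + t * (gG j x \<bullet> d) + t * (\<gamma> / 2) * (norm d)\<^sup>2"

text \<open>One iteration (Steps 3 and 4) of MPG from x (with theta x \<noteq> 0) producing x'.
  s is the sequence of trial step sizes: s 0 = 1 and each replacement picks a value in
  [tau1 t, tau2 t]. i1 is the first index accepted in Step 3.1; if Step 3.2 fails, Step 3.3
  continues with i1+1, i1+2, ... until the first index i2 accepted for all j.\<close>
definition mpg_step :: "nat \<Rightarrow> (nat \<Rightarrow> 'a \<Rightarrow> real) \<Rightarrow> (nat \<Rightarrow> 'a \<Rightarrow> 'a::real_inner) \<Rightarrow> (nat \<Rightarrow> 'a \<Rightarrow> real)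
    \<Rightarrow> (nat \<Rightarrow> 'a set) \<Rightarrow> real \<Rightarrow> real \<Rightarrow> real \<Rightarrow> real \<Rightarrow> 'a \<Rightarrow> 'a \<Rightarrow> bool" where
  "mpg_step m G gG H domH \<alpha> \<gamma> \<tau>1 \<tau>2 x x' \<longleftrightarrow>
     (let d = p_alpha m gG H domH \<alpha> x - x in
      \<exists>j<m. (\<forall>i<m. gG i x \<bullet> d \<le> gG j x \<bullet> d) \<and>
        (\<exists>s :: nat \<Rightarrow> real. s 0 = 1 \<and> (\<forall>i. \<tau>1 * s i \<le> s (Suc i) \<and> s (Suc i) \<le> \<tau>2 * s i) \<and>
          (\<exists>i1. armijo G gG \<gamma> x d j (s i1) \<and> (\<forall>i<i1. \<not> armijo G gG \<gamma> x d j (s i)) \<and>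
             ((Fle m G H domH (x + s i1 *\<^sub>R d) x \<and> x' = x + s i1 *\<^sub>R d) \<or>
              (\<not> Fle m G H domH (x + s i1 *\<^sub>R d) x \<and>
               (\<exists>i2>i1. (\<forall>l<m. armijo G gG \<gamma> x d l (s i2)) \<and>
                  (\<forall>i. i1 < i \<and> i < i2 \<longrightarrow> \<not> (\<forall>l<m. armijo G gG \<gamma> x d l (s i))) \<and>
                  x' = x + s i2 *\<^sub>R d))))))"

text \<open>A run of MPG: the algorithm stops at k when theta(x k) = 0; iterates after a stop
  are unconstrained (they are not generated by the algorithm).\<close>
definition mpg_run :: "nat \<Rightarrow> (nat \<Rightarrow> 'a \<Rightarrow> real) \<Rightarrow> (nat \<Rightarrow> 'a \<Rightarrow> 'a::real_inner) \<Rightarrow> (nat \<Rightarrow> 'a \<Rightarrow> real)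
    \<Rightarrow> (nat \<Rightarrow> 'a set) \<Rightarrow> real \<Rightarrow> real \<Rightarrow> real \<Rightarrow> real \<Rightarrow> (nat \<Rightarrow> 'a) \<Rightarrow> bool" where
  "mpg_run m G gG H domH \<alpha> \<gamma> \<tau>1 \<tau>2 x \<longleftrightarrow>
     x 0 \<in> domF m domH \<and>
     (\<forall>k. theta_alpha m gG H domH \<alpha> (x k) \<noteq> 0 \<longrightarrow>
          mpg_step m G gG H domH \<alpha> \<gamma> \<tau>1 \<tau>2 (x k) (x (Suc k)))"

end

theory Submission
  imports Defs
begin

text \<open>The proximal subproblem minimises the convex function \<open>\<psi>\<^sub>x\<close> plus \<open>|u - x|\<^sup>2/(2\<alpha>)\<close>,
  so its minimiser \<open>p\<close> satisfies the three-point inequality; comparing with \<open>u = x\<close> gives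
  \<open>\<psi>\<^sub>x(p) \<le> -|p - x|\<^sup>2/\<alpha>\<close>, and then any step \<open>t\<close> passing the Armijo test lowers the
  tested objective by at least \<open>t (1 - \<gamma>\<alpha>/2) |\<theta>(x)|\<close>. Lipschitz gradients make the test pass
  for all \<open>t \<le> \<gamma>/(2 max L\<^sub>j)\<close>, so backtracking never returns a step below a fixed \<open>t_min\<close>,
  and every iteration decreases \<open>\<Sum>\<^sub>j F\<^sub>j\<close> by \<open>\<kappa> |\<theta>(x\<^sup>k)|\<close> without increasing any \<open>F\<^sub>j\<close>.
  By (A1) this sum is bounded below along the run by its value at some \<open>z\<close>, so at most
  \<open>(\<Sum>\<^sub>j F\<^sub>j(x\<^sup>0) - \<Sum>\<^sub>j F\<^sub>j(z))/(\<kappa>\<epsilon>)\<close> iterates can have \<open>|\<theta>| > \<epsilon>\<close>.\<close>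

lemma continuous_on_Max_image:
  fixes f :: "'i \<Rightarrow> 'a::topological_space \<Rightarrow> real"
  assumes "finite I" "I \<noteq> {}" "\<And>i. i \<in> I \<Longrightarrow> continuous_on S (f i)"
  shows "continuous_on S (\<lambda>u. Max ((\<lambda>i. f i u) ` I))"
  using assms
proof (induction I rule: finite_ne_induct)
  case (insert i I)
  have "continuous_on S (\<lambda>u. max (f i u) (Max ((\<lambda>i. f i u) ` I)))"
    using insert by (intro continuous_on_max) auto
  then show ?case
    using insert by (simp add: Max_insert)
qed simp

lemma convex_on_Max_image:
  fixes f :: "'i \<Rightarrow> 'a::real_vector \<Rightarrow> real"
  assumes "finite I" "I \<noteq> {}" "convex S" "\<And>i. i \<in> I \<Longrightarrow> convex_on S (f i)"
  shows "convex_on S (\<lambda>u. Max ((\<lambda>i. f i u) ` I))"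
proof (rule convex_onI[OF _ \<open>convex S\<close>])
  fix t :: real and x y assume t: "0 < t" "t < 1" and xy: "x \<in> S" "y \<in> S"
  let ?M = "\<lambda>u. Max ((\<lambda>i. f i u) ` I)"
  have "f i ((1 - t) *\<^sub>R x + t *\<^sub>R y) \<le> (1 - t) * ?M x + t * ?M y" if i: "i \<in> I" for i
  proof -
    have "f i ((1 - t) *\<^sub>R x + t *\<^sub>R y) \<le> (1 - t) * f i x + t * f i y"
      using assms(4)[OF i] t xy by (intro convex_onD) auto
    also have "\<dots> \<le> (1 - t) * ?M x + t * ?M y"
      using t i assms(1) by (intro add_mono mult_left_mono Max_ge) auto
    finally show ?thesis .
  qed
  then show "?M ((1 - t) *\<^sub>R x + t *\<^sub>R y) \<le> (1 - t) * ?M x + t * ?M y"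
    using assms(1,2) by (simp add: Max_le_iff)
qed

lemma convex_on_add_affine:
  fixes a :: "'a::real_inner"
  assumes "convex_on S f"
  shows "convex_on S (\<lambda>u. a \<bullet> (u - x) + f u - c)"
proof -
  have "convex_on S (\<lambda>u. a \<bullet> (u - x) - c)"
    by (rule convex_onI[OF _ convex_on_imp_convex[OF assms]])
      (simp add: inner_diff_right inner_add_right algebra_simps)
  from convex_on_add[OF this assms] show ?thesis
    by (simp add: algebra_simps)
qed

lemma convex_on_growth_bound:
  fixes f :: "'a::euclidean_space \<Rightarrow> real"
  assumes "closed S" "convex_on S f" "continuous_on S f" "x \<in> S"
  obtains M where "M \<ge> 0" "\<And>u. u \<in> S \<Longrightarrow> f x - M * (1 + norm (u - x)) \<le> f u"
proof -
  define K where "K = S \<inter> cball x 1"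
  have "compact K" "x \<in> K" "continuous_on K f"
    using assms continuous_on_subset[OF assms(3)] unfolding K_def
    by (auto intro: closed_Int_compact)
  then obtain w where w: "\<And>y. y \<in> K \<Longrightarrow> f w \<le> f y"
    using continuous_attains_inf[of K f] by blast
  define M where "M = f x - f w"
  have "M \<ge> 0" using w[OF \<open>x \<in> K\<close>] unfolding M_def by simp
  have "f x - M * (1 + norm (u - x)) \<le> f u" if u: "u \<in> S" for u
  proof (cases "norm (u - x) \<le> 1")
    case True
    then have "f x - M \<le> f u"
      using w[of u] u unfolding K_def M_def by (simp add: dist_norm norm_minus_commute)
    moreover have "0 \<le> M * norm (u - x)" using \<open>M \<ge> 0\<close> by simp
    ultimately show ?thesis by (simp add: algebra_simps)
  next
    case False
    define r where "r = norm (u - x)"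
    have r: "r > 1" using False unfolding r_def by simp
    define v where "v = (1 - 1 / r) *\<^sub>R x + (1 / r) *\<^sub>R u"
    have "v - x = (1 / r) *\<^sub>R (u - x)" unfolding v_def by (simp add: algebra_simps)
    then have "norm (v - x) = 1" using r unfolding r_def by (cases "u = x") auto
    moreover have "v \<in> S"
      unfolding v_def using r assms(4) u convex_on_imp_convex[OF assms(2)] by (intro convexD_alt) auto
    ultimately have "f w \<le> f v" using w unfolding K_def by (simp add: dist_norm norm_minus_commute)
    also have "f v \<le> (1 - 1 / r) * f x + (1 / r) * f u"
      unfolding v_def using assms(2,4) u r by (intro convex_onD) auto
    finally have "r * f w \<le> (r - 1) * f x + f u"
      using r by (simp add: field_simps)
    then have "f x - M * r \<le> f u" unfolding M_def by (simp add: algebra_simps)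
    then show ?thesis using \<open>M \<ge> 0\<close> unfolding r_def by (simp add: algebra_simps)
  qed
  with \<open>M \<ge> 0\<close> show thesis by (rule that)
qed

lemma prox_argmin_exists:
  fixes f :: "'a::euclidean_space \<Rightarrow> real"
  assumes "closed S" "convex_on S f" "continuous_on S f" "x \<in> S" "\<alpha> > 0"
  obtains p where "p \<in> S"
    "\<And>v. v \<in> S \<Longrightarrow> f p + (norm (p - x))\<^sup>2 / (2 * \<alpha>) \<le> f v + (norm (v - x))\<^sup>2 / (2 * \<alpha>)"
proof -
  define \<phi> where "\<phi> v = f v + (norm (v - x))\<^sup>2 / (2 * \<alpha>)" for v
  obtain M where "M \<ge> 0" and growth: "\<And>u. u \<in> S \<Longrightarrow> f x - M * (1 + norm (u - x)) \<le> f u"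
    using convex_on_growth_bound[OF assms(1-4)] by blast
  \<comment> \<open>outside \<open>cball x R\<close> the quadratic term beats the linear lower bound of \<open>f\<close>\<close>
  define R where "R = 2 * \<alpha> * (M + 1) + M + 1"
  define K where "K = S \<inter> cball x R"
  have "compact K" "x \<in> K"
    using assms(1,4,5) \<open>M \<ge> 0\<close> unfolding K_def R_def by (auto intro: closed_Int_compact)
  moreover have "continuous_on K \<phi>"
    using continuous_on_subset[OF assms(3)] assms(5) unfolding \<phi>_def K_def
    by (auto intro!: continuous_intros)
  ultimately obtain p where "p \<in> K" and p_min: "\<And>v. v \<in> K \<Longrightarrow> \<phi> p \<le> \<phi> v"
    using continuous_attains_inf[of K \<phi>] by blast
  have "\<phi> p \<le> \<phi> v" if v: "v \<in> S" for v
  proof (cases "v \<in> K")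
    case False
    define r where "r = norm (v - x)"
    have "R < r" using False v unfolding K_def r_def by (simp add: dist_norm norm_minus_commute)
    moreover have "0 \<le> 2 * \<alpha> * (M + 1)" using \<open>M \<ge> 0\<close> assms(5) by simp
    ultimately have "M < r" "0 < r" "2 * \<alpha> * (M + 1) < r"
      using \<open>M \<ge> 0\<close> unfolding R_def by linarith+
    then have "M + 1 < r / (2 * \<alpha>)" using assms(5) by (simp add: field_simps)
    then have "r * (M + 1) < r * (r / (2 * \<alpha>))" using \<open>0 < r\<close> by (intro mult_strict_left_mono)
    with \<open>M < r\<close> have "M * (1 + r) < r\<^sup>2 / (2 * \<alpha>)" by (simp add: power2_eq_square algebra_simps)
    then have "\<phi> x < \<phi> v" using growth[OF v] unfolding \<phi>_def r_def by simp
    with p_min[OF \<open>x \<in> K\<close>] show ?thesis by simp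
  qed (use p_min in blast)
  with \<open>p \<in> K\<close> show thesis by (intro that[of p]) (auto simp: K_def \<phi>_def)
qed

lemma le_zero_if_le_scaled:
  fixes a b :: real
  assumes "\<And>s. 0 < s \<Longrightarrow> s < 1 \<Longrightarrow> a \<le> s * b"
  shows "a \<le> 0"
proof (rule tendsto_lowerbound)
  show "((\<lambda>s. s * b) \<longlongrightarrow> 0) (at_right 0)"
    by (auto intro!: tendsto_eq_intros)
  show "\<forall>\<^sub>F s in at_right 0. a \<le> s * b"
    using assms by (auto simp: eventually_at_right_field intro!: exI[of _ 1])
qed simp

lemma norm_add_scaleR_square:
  fixes a b :: "'a::real_inner"
  shows "(norm (a + s *\<^sub>R b))\<^sup>2 = (norm a)\<^sup>2 + 2 * s * (a \<bullet> b) + s\<^sup>2 * (norm b)\<^sup>2"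
  unfolding power2_norm_eq_inner
  by (simp add: inner_add_left inner_add_right inner_commute power2_eq_square algebra_simps)

lemma prox_three_point:
  fixes f :: "'a::real_inner \<Rightarrow> real"
  assumes f: "convex_on S f" and \<alpha>: "\<alpha> > 0" and "p \<in> S" "v \<in> S"
    and p_min: "\<And>u. u \<in> S \<Longrightarrow> f p + (norm (p - x))\<^sup>2 / (2 * \<alpha>) \<le> f u + (norm (u - x))\<^sup>2 / (2 * \<alpha>)"
  shows "f p + (norm (p - x))\<^sup>2 / (2 * \<alpha>) + (norm (v - p))\<^sup>2 / (2 * \<alpha>)
           \<le> f v + (norm (v - x))\<^sup>2 / (2 * \<alpha>)"
proof -
  define g where "g = (p - x) \<bullet> (v - p)"
  define Q where "Q = (norm (v - p))\<^sup>2 / (2 * \<alpha>)"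
  have "f p - f v - g / \<alpha> \<le> s * Q" if s: "0 < s" "s < 1" for s
  proof -
    define u where "u = (1 - s) *\<^sub>R p + s *\<^sub>R v"
    have "u \<in> S" using \<open>p \<in> S\<close> \<open>v \<in> S\<close> s convex_on_imp_convex[OF f]
      unfolding u_def by (intro convexD_alt) auto
    have "u - x = (p - x) + s *\<^sub>R (v - p)" unfolding u_def by (simp add: algebra_simps)
    then have "(norm (u - x))\<^sup>2 = (norm (p - x))\<^sup>2 + 2 * s * g + s\<^sup>2 * (norm (v - p))\<^sup>2"
      unfolding g_def by (simp only: norm_add_scaleR_square)
    then have "(norm (u - x))\<^sup>2 / (2 * \<alpha>) = (norm (p - x))\<^sup>2 / (2 * \<alpha>) + s * (g / \<alpha>) + s * (s * Q)"
      using \<alpha> unfolding Q_def by (simp add: field_simps power2_eq_square)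
    moreover have "f u \<le> (1 - s) * f p + s * f v"
      unfolding u_def using f \<open>p \<in> S\<close> \<open>v \<in> S\<close> s by (intro convex_onD) auto
    ultimately have "s * f p \<le> s * (f v + g / \<alpha> + s * Q)"
      using p_min[OF \<open>u \<in> S\<close>] by (simp add: algebra_simps)
    then have "f p \<le> f v + g / \<alpha> + s * Q" using s by simp
    then show ?thesis by (simp add: algebra_simps)
  qed
  then have "f p - f v - g / \<alpha> \<le> 0" by (rule le_zero_if_le_scaled)
  moreover have "(norm (v - x))\<^sup>2 = (norm (v - p))\<^sup>2 + 2 * g + (norm (p - x))\<^sup>2"
    using norm_add_scaleR_square[of "p - x" 1 "v - p"] unfolding g_def
    by (simp add: norm_minus_commute algebra_simps)
  then have "(norm (v - x))\<^sup>2 / (2 * \<alpha>)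
      = (norm (p - x))\<^sup>2 / (2 * \<alpha>) + (norm (v - p))\<^sup>2 / (2 * \<alpha>) + g / \<alpha>"
    using \<alpha> by (simp add: field_simps)
  ultimately show ?thesis by linarith
qed

lemma prox_argmin_unique:
  fixes f :: "'a::real_inner \<Rightarrow> real"
  assumes "convex_on S f" "\<alpha> > 0" "p \<in> S" "q \<in> S"
    and p_min: "\<And>u. u \<in> S \<Longrightarrow> f p + (norm (p - x))\<^sup>2 / (2 * \<alpha>) \<le> f u + (norm (u - x))\<^sup>2 / (2 * \<alpha>)"
    and q_min: "\<And>u. u \<in> S \<Longrightarrow> f q + (norm (q - x))\<^sup>2 / (2 * \<alpha>) \<le> f u + (norm (u - x))\<^sup>2 / (2 * \<alpha>)"
  shows "p = q"
proof -
  have "(norm (q - p))\<^sup>2 / (2 * \<alpha>) \<le> 0"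
    using prox_three_point[OF assms(1-4) p_min] q_min[OF \<open>p \<in> S\<close>] by simp
  then show ?thesis using \<open>\<alpha> > 0\<close> by (simp add: divide_le_0_iff)
qed

lemma lipschitz_gradient_upper_bound:
  fixes g :: "'a::real_inner \<Rightarrow> real"
  assumes der: "\<And>y. (g has_derivative (\<lambda>h. gg y \<bullet> h)) (at y)"
    and lip: "lipschitz_on L UNIV gg"
  shows "g (x + d) \<le> g x + gg x \<bullet> d + L * (norm d)\<^sup>2"
proof -
  define f where "f s = g (x + s *\<^sub>R d) - s * (gg x \<bullet> d)" for s
  define f' where "f' s h = h * ((gg (x + s *\<^sub>R d) - gg x) \<bullet> d)" for s h
  have "(f has_derivative f' s) (at s within {0..1})" for s
  proof -
    have "((\<lambda>s. x + s *\<^sub>R d) has_derivative (\<lambda>h. h *\<^sub>R d)) (at s within {0..1})"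
      by (auto intro!: derivative_eq_intros)
    from has_derivative_in_compose[OF this has_derivative_at_withinI[OF der]]
    have "((\<lambda>s. g (x + s *\<^sub>R d)) has_derivative (\<lambda>h. gg (x + s *\<^sub>R d) \<bullet> (h *\<^sub>R d)))
        (at s within {0..1})"
      by (simp add: o_def)
    then show ?thesis unfolding f_def f'_def
      by (auto intro!: derivative_eq_intros simp: algebra_simps inner_diff_left)
  qed
  then obtain z where z: "z \<in> {0<..<1}" "f 1 - f 0 = f' z 1"
    using mvt_simple[of 0 1 f f'] by auto
  have "f' z 1 \<le> norm (gg (x + z *\<^sub>R d) - gg x) * norm d"
    unfolding f'_def by (simp add: norm_cauchy_schwarz)
  also have "\<dots> \<le> L * norm (z *\<^sub>R d) * norm d"
    using lipschitz_onD[OF lip, of "x + z *\<^sub>R d" x] by (intro mult_right_mono) (auto simp: dist_norm)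
  also have "\<dots> \<le> L * (norm d)\<^sup>2"
  proof -
    have "norm (z *\<^sub>R d) \<le> norm d" using z by (simp add: mult_left_le_one_le)
    then have "L * norm (z *\<^sub>R d) * norm d \<le> L * norm d * norm d"
      using lipschitz_on_nonneg[OF lip] by (intro mult_right_mono mult_left_mono) auto
    then show ?thesis unfolding power2_eq_square by (simp only: mult.assoc)
  qed
  finally show ?thesis using z unfolding f_def by simp
qed

lemma backtracking_steps_bounds:
  fixes s :: "nat \<Rightarrow> real"
  assumes "s 0 = 1" "\<And>i. \<tau>1 * s i \<le> s (Suc i)" "\<And>i. s (Suc i) \<le> \<tau>2 * s i" "0 < \<tau>1" "\<tau>2 \<le> 1"
  shows "0 < s i \<and> s i \<le> 1"
proof (induction i)
  case (Suc i)
  have "\<tau>1 * s i > 0" "\<tau>2 * s i \<le> s i"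
    using Suc assms(4,5) by (auto simp: mult_le_cancel_right1)
  then show ?case using Suc assms(2,3)[of i] by linarith
qed (use assms(1) in simp)

lemma backtracking_accepted_step_ge:
  fixes s :: "nat \<Rightarrow> real"
  assumes shrink: "\<And>i. \<tau>1 * s i \<le> s (Suc i)" and "0 < \<tau>1"
    and small_accepted: "\<And>i. \<not> P (s i) \<Longrightarrow> t0 < s i"
    and "i0 \<le> i" and rejected: "\<And>k. i0 \<le> k \<Longrightarrow> k < i \<Longrightarrow> \<not> P (s k)"
  shows "min (s i0) (\<tau>1 * t0) \<le> s i"
proof (cases "i = i0")
  case False
  then obtain k where k: "i = Suc k" "i0 \<le> k" using \<open>i0 \<le> i\<close> by (cases i) auto
  then have "t0 < s k" using small_accepted rejected by simp
  then have "\<tau>1 * t0 \<le> \<tau>1 * s k" using \<open>0 < \<tau>1\<close> by simp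
  moreover have "min (s i0) (\<tau>1 * t0) \<le> \<tau>1 * t0" by simp
  ultimately show ?thesis using shrink[of k] unfolding k(1) by linarith
qed simp

lemma sufficient_decrease_iteration_bound:
  fixes E a :: "nat \<Rightarrow> real"
  assumes "\<kappa> > 0" and decrease: "\<And>k. E (Suc k) \<le> E k - \<kappa> * a k" and bounded: "\<And>k. E_inf \<le> E k"
  shows "\<exists>C>0. \<forall>\<epsilon>>0. \<exists>k. real k \<le> C / \<epsilon> \<and> a k \<le> \<epsilon>"
proof -
  define C where "C = (E 0 - E_inf) / \<kappa> + 1"
  have "0 \<le> (E 0 - E_inf) / \<kappa>" using bounded[of 0] \<open>\<kappa> > 0\<close> by simp
  then have "C > 0" unfolding C_def by linarith
  moreover have "\<exists>k. real k \<le> C / \<epsilon> \<and> a k \<le> \<epsilon>" if "\<epsilon> > 0" for \<epsilon>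
  proof (rule ccontr)
    assume "\<not> ?thesis"
    then have large: "\<epsilon> < a k" if "real k \<le> C / \<epsilon>" for k
      using that by force
    define N where "N = nat \<lfloor>C / \<epsilon>\<rfloor>"
    have "real N = \<lfloor>C / \<epsilon>\<rfloor>" using \<open>C > 0\<close> \<open>\<epsilon> > 0\<close> unfolding N_def by simp
    then have N: "real N \<le> C / \<epsilon>" "C / \<epsilon> < real N + 1" by linarith+
    have "E n \<le> E 0 - \<kappa> * \<epsilon> * real n" if "n \<le> Suc N" for n
      using that
    proof (induction n)
      case (Suc n)
      then have "\<kappa> * \<epsilon> \<le> \<kappa> * a n" using large[of n] N(1) \<open>\<kappa> > 0\<close> by simp
      then show ?case using Suc decrease[of n] by (simp add: algebra_simps)
    qed simp
    from this[of "Suc N"] bounded[of "Suc N"]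
    have "(real N + 1) * \<epsilon> \<le> C - 1"
      using \<open>\<kappa> > 0\<close> unfolding C_def by (simp add: field_simps)
    moreover have "C < (real N + 1) * \<epsilon>" using N(2) \<open>\<epsilon> > 0\<close> by (simp add: field_simps)
    ultimately show False by simp
  qed
  ultimately show ?thesis by blast
qed

locale mpg_prox =
  fixes m :: nat and gG :: "nat \<Rightarrow> 'a::euclidean_space \<Rightarrow> 'a" and H :: "nat \<Rightarrow> 'a \<Rightarrow> real"
    and domH :: "nat \<Rightarrow> 'a set" and \<alpha> :: real
  assumes m_pos: "m > 0"
    and H_convex: "\<forall>j<m. convex (domH j) \<and> convex_on (domH j) (H j)"
    and H_cont: "\<forall>j<m. continuous_on (domH j) (H j)"
    and domF_closed: "closed (domF m domH)"
    and alpha: "\<alpha> > 0"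
begin

abbreviation "D \<equiv> domF m domH"
abbreviation "\<psi> \<equiv> psi m gG H"
abbreviation "prox \<equiv> p_alpha m gG H domH \<alpha>"
abbreviation "\<theta> \<equiv> theta_alpha m gG H domH \<alpha>"

lemma convex_D: "convex D"
  unfolding domF_def using H_convex by (intro convex_INT) auto

lemma D_subset_domH: "j < m \<Longrightarrow> D \<subseteq> domH j"
  unfolding domF_def by auto

lemma psi_self [simp]: "\<psi> x x = 0"
proof -
  have "(\<lambda>j. gG j x \<bullet> (x - x) + H j x - H j x) ` {..<m} = {0}"
    using m_pos by auto
  then show ?thesis unfolding psi_def by simp
qed

lemma psi_ge: "j < m \<Longrightarrow> gG j x \<bullet> (u - x) + H j u - H j x \<le> \<psi> x u"
  unfolding psi_def by (intro Max_ge) auto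

lemma convex_on_psi: "convex_on D (\<psi> x)"
  unfolding psi_def
proof (intro convex_on_Max_image convex_on_add_affine)
  show "convex_on D (H j)" if "j \<in> {..<m}" for j
    using H_convex that D_subset_domH convex_D by (auto intro: convex_on_subset)
qed (use m_pos convex_D in auto)

lemma continuous_on_psi: "continuous_on D (\<psi> x)"
  unfolding psi_def
proof (intro continuous_on_Max_image continuous_intros)
  show "continuous_on D (H j)" if "j \<in> {..<m}" for j
    using H_cont that D_subset_domH by (auto intro: continuous_on_subset)
qed (use m_pos in auto)

lemma prox_minimizes:
  assumes "x \<in> D"
  shows "prox x \<in> D"
    and "\<And>v. v \<in> D \<Longrightarrow> \<psi> x (prox x) + (norm (prox x - x))\<^sup>2 / (2 * \<alpha>) \<le> \<psi> x v + (norm (v - x))\<^sup>2 / (2 * \<alpha>)"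
proof -
  let ?min = "\<lambda>p. p \<in> D \<and> (\<forall>v\<in>D. \<psi> x p + (norm (p - x))\<^sup>2 / (2 * \<alpha>) \<le> \<psi> x v + (norm (v - x))\<^sup>2 / (2 * \<alpha>))"
  have "\<exists>!p. ?min p"
  proof (rule ex_ex1I)
    show "\<exists>p. ?min p"
      using prox_argmin_exists[OF domF_closed convex_on_psi continuous_on_psi assms alpha] by metis
    show "p = q" if "?min p" "?min q" for p q
      using that by (intro prox_argmin_unique[OF convex_on_psi alpha]) auto
  qed
  then have "?min (prox x)" unfolding p_alpha_def by (rule theI')
  then show "prox x \<in> D"
    and "\<And>v. v \<in> D \<Longrightarrow> \<psi> x (prox x) + (norm (prox x - x))\<^sup>2 / (2 * \<alpha>) \<le> \<psi> x v + (norm (v - x))\<^sup>2 / (2 * \<alpha>)"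
    by auto
qed

lemma theta_eq: "\<theta> x = \<psi> x (prox x) + (norm (prox x - x))\<^sup>2 / (2 * \<alpha>)"
  unfolding theta_alpha_def Let_def ..

lemma theta_nonpos: "x \<in> D \<Longrightarrow> \<theta> x \<le> 0"
  using prox_minimizes(2)[of x x] by (simp add: theta_eq)

lemma psi_prox_le:
  assumes "x \<in> D"
  shows "\<psi> x (prox x) \<le> - (norm (prox x - x))\<^sup>2 / \<alpha>"
  using prox_three_point[OF convex_on_psi alpha prox_minimizes(1)[OF assms] assms prox_minimizes(2)[OF assms]]
  by (simp add: norm_minus_commute field_simps)

end

locale mpg = mpg_prox m gG H domH \<alpha> for m gG H domH \<alpha> +
  fixes G :: "nat \<Rightarrow> 'a \<Rightarrow> real" and \<gamma> \<tau>1 \<tau>2 :: real and L :: "nat \<Rightarrow> real"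
  assumes G_diff: "\<forall>j<m. \<forall>y. (G j has_derivative (\<lambda>h. gG j y \<bullet> h)) (at y)"
    and Lip: "\<forall>j<m. L j > 0 \<and> lipschitz_on (L j) UNIV (gG j)"
    and gamma: "0 < \<gamma>" "\<gamma> < 2 / \<alpha>"
    and tau: "0 < \<tau>1" "\<tau>1 < \<tau>2" "\<tau>2 < 1"
begin

abbreviation F :: "nat \<Rightarrow> 'a \<Rightarrow> real" where "F j u \<equiv> G j u + H j u"

definition "F_sum u = (\<Sum>j<m. F j u)"
definition "L_max = Max (L ` {..<m})"
definition "t_armijo = \<gamma> / (2 * L_max)"
definition "t_min = \<tau>1 * min 1 (\<tau>1 * t_armijo)"
definition "\<kappa> = (1 - \<gamma> * \<alpha> / 2) * t_min"

lemma L_le_L_max: "j < m \<Longrightarrow> L j \<le> L_max"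
  unfolding L_max_def by (intro Max_ge) auto

lemma t_armijo_pos: "t_armijo > 0"
  using L_le_L_max[OF m_pos] Lip m_pos gamma unfolding t_armijo_def by force

lemma t_min_le: "t_min \<le> min 1 (\<tau>1 * t_armijo)"
proof -
  have "0 \<le> min 1 (\<tau>1 * t_armijo)" using tau t_armijo_pos by simp
  then show ?thesis using tau unfolding t_min_def by (intro mult_left_le_one_le) auto
qed

lemma descent_factor_pos: "0 < 1 - \<gamma> * \<alpha> / 2"
  using gamma alpha by (simp add: less_divide_eq)

lemma t_min_pos: "t_min > 0"
  using tau t_armijo_pos unfolding t_min_def by simp

lemma kappa_pos: "\<kappa> > 0"
  using descent_factor_pos t_min_pos unfolding \<kappa>_def by simp

lemma armijo_small_step:
  assumes "j < m" "0 < t" "t \<le> t_armijo"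
  shows "armijo G gG \<gamma> x d j t"
proof -
  have "t * L j \<le> t_armijo * L_max"
    using assms L_le_L_max Lip by (intro mult_mono) auto
  also have "\<dots> = \<gamma> / 2"
    using L_le_L_max[OF m_pos] Lip m_pos unfolding t_armijo_def by force
  finally have "t * L j * (norm d)\<^sup>2 \<le> \<gamma> / 2 * (norm d)\<^sup>2"
    by (rule mult_right_mono) simp
  then have "t * (t * L j * (norm d)\<^sup>2) \<le> t * (\<gamma> / 2 * (norm d)\<^sup>2)"
    using \<open>0 < t\<close> by (intro mult_left_mono) auto
  then have "L j * (norm (t *\<^sub>R d))\<^sup>2 \<le> t * (\<gamma> / 2) * (norm d)\<^sup>2"
    using \<open>0 < t\<close> by (simp add: power_mult_distrib power2_eq_square algebra_simps)
  then show ?thesis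
    using lipschitz_gradient_upper_bound[of "G j" "gG j" "L j" x "t *\<^sub>R d"] G_diff Lip \<open>j < m\<close>
    unfolding armijo_def by auto
qed

lemma psi_prox_descent:
  assumes "x \<in> D"
  shows "\<psi> x (prox x) + \<gamma> / 2 * (norm (prox x - x))\<^sup>2 \<le> (1 - \<gamma> * \<alpha> / 2) * \<theta> x"
proof -
  define N where "N = (norm (prox x - x))\<^sup>2"
  have "\<gamma> * \<alpha> / 2 * \<psi> x (prox x) \<le> - \<gamma> / 2 * N"
    using mult_left_mono[OF psi_prox_le[OF assms], of "\<gamma> * \<alpha> / 2"] gamma alpha
    unfolding N_def by simp
  moreover have "0 \<le> (1 - \<gamma> * \<alpha> / 2) * (N / (2 * \<alpha>))"
    using descent_factor_pos alpha unfolding N_def by simp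
  ultimately show ?thesis
    unfolding theta_eq N_def[symmetric] by (simp add: algebra_simps)
qed

lemma armijo_decrease:
  assumes "x \<in> D" "j < m" "0 < t" "t \<le> 1" and arm: "armijo G gG \<gamma> x (prox x - x) j t"
  shows "x + t *\<^sub>R (prox x - x) \<in> D"
    and "F j (x + t *\<^sub>R (prox x - x)) \<le> F j x + t * (1 - \<gamma> * \<alpha> / 2) * \<theta> x"
proof -
  define p where "p = prox x"
  have "p \<in> D" using prox_minimizes(1)[OF assms(1)] unfolding p_def .
  have x_t: "x + t *\<^sub>R (p - x) = (1 - t) *\<^sub>R x + t *\<^sub>R p" by (simp add: algebra_simps)
  have "(1 - t) *\<^sub>R x + t *\<^sub>R p \<in> D"
    using convexD_alt[OF convex_D \<open>x \<in> D\<close> \<open>p \<in> D\<close>] assms(3,4) by simp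
  then show "x + t *\<^sub>R (prox x - x) \<in> D" using x_t unfolding p_def by metis
  have "x \<in> domH j" "p \<in> domH j" using D_subset_domH[OF \<open>j < m\<close>] \<open>x \<in> D\<close> \<open>p \<in> D\<close> by auto
  then have "H j (x + t *\<^sub>R (p - x)) \<le> (1 - t) * H j x + t * H j p"
    unfolding x_t using H_convex \<open>j < m\<close> assms(3,4) by (intro convex_onD) auto
  moreover have "gG j x \<bullet> (p - x) + H j p - H j x + \<gamma> / 2 * (norm (p - x))\<^sup>2 \<le> (1 - \<gamma> * \<alpha> / 2) * \<theta> x"
    using psi_ge[OF \<open>j < m\<close>, of x p] psi_prox_descent[OF \<open>x \<in> D\<close>] unfolding p_def by linarith
  then have "t * (gG j x \<bullet> (p - x) + H j p - H j x + \<gamma> / 2 * (norm (p - x))\<^sup>2) \<le> t * ((1 - \<gamma> * \<alpha> / 2) * \<theta> x)"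
    using assms(3) by (intro mult_left_mono) auto
  ultimately show "F j (x + t *\<^sub>R (prox x - x)) \<le> F j x + t * (1 - \<gamma> * \<alpha> / 2) * \<theta> x"
    using arm unfolding armijo_def p_def by (simp add: algebra_simps)
qed

lemma mpg_step_accepted:
  assumes "mpg_step m G gG H domH \<alpha> \<gamma> \<tau>1 \<tau>2 x x'"
  obtains j t where "j < m" "t_min \<le> t" "t \<le> 1" "armijo G gG \<gamma> x (prox x - x) j t"
    "x' = x + t *\<^sub>R (prox x - x)"
    "Fle m G H domH x' x \<or> (\<forall>l<m. armijo G gG \<gamma> x (prox x - x) l t)"
proof -
  define d where "d = prox x - x"
  obtain j s i1 where "j < m" and s0: "s 0 = 1"
    and s_step: "\<And>i. \<tau>1 * s i \<le> s (Suc i) \<and> s (Suc i) \<le> \<tau>2 * s i"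
    and i1: "armijo G gG \<gamma> x d j (s i1)" "\<And>i. i < i1 \<Longrightarrow> \<not> armijo G gG \<gamma> x d j (s i)"
    and branches: "(Fle m G H domH (x + s i1 *\<^sub>R d) x \<and> x' = x + s i1 *\<^sub>R d) \<or>
        (\<exists>i2>i1. (\<forall>l<m. armijo G gG \<gamma> x d l (s i2)) \<and>
           (\<forall>i. i1 < i \<and> i < i2 \<longrightarrow> \<not> (\<forall>l<m. armijo G gG \<gamma> x d l (s i))) \<and>
           x' = x + s i2 *\<^sub>R d)"
    using assms unfolding mpg_step_def Let_def d_def by blast
  have shrink: "\<And>i. \<tau>1 * s i \<le> s (Suc i)" using s_step by blast
  have s_bounds: "0 < s i" "s i \<le> 1" for i
    using backtracking_steps_bounds[of s \<tau>1 \<tau>2 i] s0 s_step tau by auto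
  have large_if_rejected: "t_armijo < s i" if "l < m" "\<not> armijo G gG \<gamma> x d l (s i)" for l i
    using armijo_small_step[OF that(1) s_bounds(1)] that(2) by (meson not_le)
  have "min (s 0) (\<tau>1 * t_armijo) \<le> s i1"
    using large_if_rejected[OF \<open>j < m\<close>] i1(2) tau(1)
    by (intro backtracking_accepted_step_ge[of \<tau>1 s "armijo G gG \<gamma> x d j" t_armijo 0 i1, OF shrink])
      auto
  then have "min 1 (\<tau>1 * t_armijo) \<le> s i1" using s0 by simp
  then have "t_min \<le> s i1" using t_min_le by linarith
  from branches show thesis
  proof (elim disjE exE conjE)
    assume "Fle m G H domH (x + s i1 *\<^sub>R d) x" "x' = x + s i1 *\<^sub>R d"
    then show thesis using that[of j "s i1"] \<open>j < m\<close> \<open>t_min \<le> s i1\<close> s_bounds i1(1)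
      unfolding d_def by blast
  next
    fix i2 assume "i1 < i2" and accepted: "\<forall>l<m. armijo G gG \<gamma> x d l (s i2)"
      and rejected: "\<forall>i. i1 < i \<and> i < i2 \<longrightarrow> \<not> (\<forall>l<m. armijo G gG \<gamma> x d l (s i))"
      and "x' = x + s i2 *\<^sub>R d"
    have "min (s (Suc i1)) (\<tau>1 * t_armijo) \<le> s i2"
      using large_if_rejected rejected \<open>i1 < i2\<close> tau(1)
      by (intro backtracking_accepted_step_ge[of \<tau>1 s "\<lambda>t. \<forall>l<m. armijo G gG \<gamma> x d l t"
            t_armijo "Suc i1" i2, OF shrink]) auto
    moreover have "t_min \<le> s (Suc i1)"
      using s_step[of i1] mult_left_mono[OF \<open>min 1 (\<tau>1 * t_armijo) \<le> s i1\<close>, of \<tau>1] tau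
      unfolding t_min_def by linarith
    ultimately have "t_min \<le> s i2" using t_min_le by linarith
    then show thesis using that[of j "s i2"] \<open>j < m\<close> s_bounds accepted \<open>x' = x + s i2 *\<^sub>R d\<close>
      unfolding d_def by blast
  qed
qed

lemma mpg_step_decrease:
  assumes "x \<in> D" and step: "mpg_step m G gG H domH \<alpha> \<gamma> \<tau>1 \<tau>2 x x'"
  shows "Fle m G H domH x' x" and "F_sum x' \<le> F_sum x - \<kappa> * \<bar>\<theta> x\<bar>"
proof -
  obtain j t where "j < m" "t_min \<le> t" "t \<le> 1" and arm: "armijo G gG \<gamma> x (prox x - x) j t"
    and x': "x' = x + t *\<^sub>R (prox x - x)"
    and "Fle m G H domH x' x \<or> (\<forall>l<m. armijo G gG \<gamma> x (prox x - x) l t)"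
    using mpg_step_accepted[OF step] by blast
  have "0 < t" using \<open>t_min \<le> t\<close> t_min_pos by linarith
  have "\<theta> x \<le> 0" using theta_nonpos[OF \<open>x \<in> D\<close>] .
  have decrease: "F l x' \<le> F l x + t * (1 - \<gamma> * \<alpha> / 2) * \<theta> x"
    if "l < m" "armijo G gG \<gamma> x (prox x - x) l t" for l
    using armijo_decrease(2)[OF \<open>x \<in> D\<close> that(1) \<open>0 < t\<close> \<open>t \<le> 1\<close> that(2)] unfolding x' .
  show fle: "Fle m G H domH x' x"
    using \<open>Fle m G H domH x' x \<or> _\<close>
  proof
    assume all: "\<forall>l<m. armijo G gG \<gamma> x (prox x - x) l t"
    have "t * (1 - \<gamma> * \<alpha> / 2) * \<theta> x \<le> 0"
      using \<open>0 < t\<close> descent_factor_pos \<open>\<theta> x \<le> 0\<close> by (simp add: mult_nonneg_nonpos)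
    then show ?thesis
      using armijo_decrease(1)[OF \<open>x \<in> D\<close> \<open>j < m\<close> \<open>0 < t\<close> \<open>t \<le> 1\<close> arm] all decrease
      unfolding Fle_def x'[symmetric] by force
  qed
  have "t * (1 - \<gamma> * \<alpha> / 2) * \<theta> x \<le> - \<kappa> * \<bar>\<theta> x\<bar>"
  proof -
    have "t_min * ((1 - \<gamma> * \<alpha> / 2) * \<theta> x) \<ge> t * ((1 - \<gamma> * \<alpha> / 2) * \<theta> x)"
      using \<open>t_min \<le> t\<close> descent_factor_pos \<open>\<theta> x \<le> 0\<close>
      by (intro mult_right_mono_neg) (auto simp: mult_nonneg_nonpos)
    then show ?thesis using \<open>\<theta> x \<le> 0\<close> unfolding \<kappa>_def by (simp add: algebra_simps)
  qed
  with decrease[OF \<open>j < m\<close> arm] have "F j x' \<le> F j x - \<kappa> * \<bar>\<theta> x\<bar>" by linarith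
  then have "F_sum x' \<le> (\<Sum>l<m. F l x - (if l = j then \<kappa> * \<bar>\<theta> x\<bar> else 0))"
    using fle \<open>j < m\<close> unfolding F_sum_def Fle_def by (intro sum_mono) auto
  also have "\<dots> = F_sum x - \<kappa> * \<bar>\<theta> x\<bar>"
    using \<open>j < m\<close> unfolding F_sum_def by (simp add: sum_subtractf)
  finally show "F_sum x' \<le> F_sum x - \<kappa> * \<bar>\<theta> x\<bar>" .
qed

lemma mpg_run_stopped:
  assumes run: "mpg_run m G gG H domH \<alpha> \<gamma> \<tau>1 \<tau>2 x"
  obtains y where "\<And>k. y k \<in> D" "\<And>k. Fle m G H domH (y (Suc k)) (y k)"
    "\<And>k. F_sum (y (Suc k)) \<le> F_sum (y k) - \<kappa> * \<bar>\<theta> (y k)\<bar>" "\<And>k. \<exists>k'\<le>k. y k = x k'"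
proof -
  have "x 0 \<in> D" and step: "\<And>k. \<theta> (x k) \<noteq> 0 \<Longrightarrow> mpg_step m G gG H domH \<alpha> \<gamma> \<tau>1 \<tau>2 (x k) (x (Suc k))"
    using run unfolding mpg_run_def by auto
  \<comment> \<open>the run frozen at its first stationary iterate, to which (A1) applies\<close>
  define y where "y = rec_nat (x 0) (\<lambda>k yk. if \<theta> yk = 0 then yk else x (Suc k))"
  have y0: "y 0 = x 0" and y_Suc: "y (Suc k) = (if \<theta> (y k) = 0 then y k else x (Suc k))" for k
    unfolding y_def by simp_all
  have inv: "y k \<in> D \<and> (\<theta> (y k) \<noteq> 0 \<longrightarrow> y k = x k) \<and> (\<exists>k'\<le>k. y k = x k')" for k
  proof (induction k)
    case (Suc k)
    show ?case
    proof (cases "\<theta> (y k) = 0")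
      case True
      with Suc obtain k' where "k' \<le> k" "y k = x k'" by blast
      then show ?thesis using Suc True y_Suc[of k] by (auto intro!: exI[of _ k'])
    next
      case False
      then have "mpg_step m G gG H domH \<alpha> \<gamma> \<tau>1 \<tau>2 (y k) (x (Suc k))" using Suc step by auto
      then have "x (Suc k) \<in> D" using mpg_step_decrease(1) Suc unfolding Fle_def by blast
      then show ?thesis using False y_Suc[of k] by auto
    qed
  qed (use y0 \<open>x 0 \<in> D\<close> in auto)
  have "Fle m G H domH (y (Suc k)) (y k) \<and> F_sum (y (Suc k)) \<le> F_sum (y k) - \<kappa> * \<bar>\<theta> (y k)\<bar>" for k
  proof (cases "\<theta> (y k) = 0")
    case True
    then show ?thesis using inv[of k] y_Suc[of k] unfolding Fle_def by simp
  next
    case False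
    then have "mpg_step m G gG H domH \<alpha> \<gamma> \<tau>1 \<tau>2 (y k) (y (Suc k))" using inv[of k] step y_Suc[of k] by auto
    then show ?thesis using mpg_step_decrease inv[of k] by blast
  qed
  with inv show thesis by (intro that[of y]) auto
qed

theorem mpg_iteration_complexity:
  assumes A1: "\<forall>y :: nat \<Rightarrow> 'a. (\<forall>k. y k \<in> D) \<and> (\<forall>k. Fle m G H domH (y (Suc k)) (y k)) \<longrightarrow>
               (\<exists>z\<in>D. \<forall>k. Fle m G H domH z (y k))"
    and run: "mpg_run m G gG H domH \<alpha> \<gamma> \<tau>1 \<tau>2 x"
  shows "\<exists>C>0. \<forall>\<epsilon>>0. \<exists>k. real k \<le> C / \<epsilon> \<and> \<bar>\<theta> (x k)\<bar> \<le> \<epsilon>"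
proof -
  obtain y where "\<And>k. y k \<in> D" "\<And>k. Fle m G H domH (y (Suc k)) (y k)"
    and decrease: "\<And>k. F_sum (y (Suc k)) \<le> F_sum (y k) - \<kappa> * \<bar>\<theta> (y k)\<bar>"
    and y_x: "\<And>k. \<exists>k'\<le>k. y k = x k'"
    using mpg_run_stopped[OF run] by blast
  then obtain z where "\<And>k. Fle m G H domH z (y k)" using A1 by blast
  then have "F_sum z \<le> F_sum (y k)" for k unfolding Fle_def F_sum_def by (intro sum_mono) auto
  from sufficient_decrease_iteration_bound[where E = "\<lambda>k. F_sum (y k)" and a = "\<lambda>k. \<bar>\<theta> (y k)\<bar>",
      OF kappa_pos decrease this]
  obtain C where "C > 0" and C: "\<And>\<epsilon>. \<epsilon> > 0 \<Longrightarrow> \<exists>k. real k \<le> C / \<epsilon> \<and> \<bar>\<theta> (y k)\<bar> \<le> \<epsilon>"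
    by blast
  have "\<exists>k'. real k' \<le> C / \<epsilon> \<and> \<bar>\<theta> (x k')\<bar> \<le> \<epsilon>" if "\<epsilon> > 0" for \<epsilon>
  proof -
    obtain k where "real k \<le> C / \<epsilon>" "\<bar>\<theta> (y k)\<bar> \<le> \<epsilon>" using C \<open>\<epsilon> > 0\<close> by blast
    moreover obtain k' where "k' \<le> k" "y k = x k'" using y_x by blast
    ultimately show ?thesis by (intro exI[of _ k']) auto
  qed
  with \<open>C > 0\<close> show ?thesis by blast
qed

end

theorem mainTheorem7:
  fixes m :: nat
    and G H :: "nat \<Rightarrow> real ^ 'n \<Rightarrow> real"
    and gG :: "nat \<Rightarrow> real ^ 'n \<Rightarrow> real ^ 'n"
    and domH :: "nat \<Rightarrow> (real ^ 'n) set"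
    and L :: "nat \<Rightarrow> real"
    and \<alpha> \<gamma> \<tau>1 \<tau>2 :: real
    and x :: "nat \<Rightarrow> real ^ 'n"
  assumes m_pos: "m > 0"
    and G_diff: "\<forall>j<m. \<forall>y. (G j has_derivative (\<lambda>h. gG j y \<bullet> h)) (at y)"
    and G_C1: "\<forall>j<m. continuous_on UNIV (gG j)"
    and G_convex: "\<forall>j<m. convex_on UNIV (G j)"
    and H_proper: "\<forall>j<m. domH j \<noteq> {}"
    and H_convex: "\<forall>j<m. convex (domH j) \<and> convex_on (domH j) (H j)"
    and H_cont: "\<forall>j<m. continuous_on (domH j) (H j)"
    and domF_ne: "domF m domH \<noteq> {}"
    and domF_closed: "closed (domF m domH)"
    and A1: "\<forall>y :: nat \<Rightarrow> real ^ 'n. (\<forall>k. y k \<in> domF m domH) \<and>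
               (\<forall>k. Fle m G H domH (y (Suc k)) (y k)) \<longrightarrow>
               (\<exists>z\<in>domF m domH. \<forall>k. Fle m G H domH z (y k))"
    and Lip: "\<forall>j<m. L j > 0 \<and> lipschitz_on (L j) UNIV (gG j)"
    and alpha: "\<alpha> > 0"
    and gamma: "0 < \<gamma>" "\<gamma> < 2 / \<alpha>"
    and tau: "0 < \<tau>1" "\<tau>1 < \<tau>2" "\<tau>2 < 1"
    and run: "mpg_run m G gG H domH \<alpha> \<gamma> \<tau>1 \<tau>2 x"
  shows "\<exists>C>0. \<forall>\<epsilon>>0. \<exists>k. real k \<le> C / \<epsilon> \<and>
           \<bar>theta_alpha m gG H domH \<alpha> (x k)\<bar> \<le> \<epsilon>"
proof -
  interpret mpg m gG H domH \<alpha> G \<gamma> \<tau>1 \<tau>2 L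
    using m_pos H_convex H_cont domF_closed alpha G_diff Lip gamma tau by unfold_locales
  show ?thesis using mpg_iteration_complexity[OF A1 run] .
qed

end
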